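(* The system $\dot d_k=(1+\alpha d_k)(c_k^{(1)}-c_{k-1}^{(1)})$, $\dot c_k^{(j)}=c_k^{(j)}(d_{k+j}-d_k+\alpha c_{k+j}^{(1)}-\alpha c_{k-1}^{(1)})+(c_k^{(j+1)}-c_{k-1}^{(j+1)})$ ($1\le j\le m-1$), $\dot c_k^{(m)}=c_k^{(m)}(d_{k+m}-d_k+\alpha c_{k+m}^{(1)}-\alpha c_{k-1}^{(1)})$ is Hamiltonian with respect to the bracket $\{\cdot,\cdot\}_{2\alpha}$ with Hamilton function $H=\alpha^{-1}\sum_{k=1}^Nd_k+\sum_{k=1}^Nc_k^{(1)}$.
   Context: $N\ge2m+2$, $m\ge1$, $\alpha\neq0$ real, subscripts modulo $N$; phase space $\mathbb R^{(m+1)N}$ with coordinates $d_k,c_k^{(j)}$ ($1\le k\le N$, $1\le j\le m$); convention $c_k^{(p)}=0$ for $p>m$. The bracket $\{\cdot,\cdot\}_{2\alpha}$ is defined by: $\{d_k,d_l\}_{2\alpha}=0$; $\{d_k,c_k^{(j)}\}_{2\alpha}=-c_k^{(j)}(1+\alpha d_k)$, $\{c_k^{(j)},d_{k+j}\}_{2\alpha}=-c_k^{(j)}(1+\alpha d_{k+j})$; $\{c_k^{(i)},c_{k+i}^{(j)}\}_{2\alpha}=-c_k^{(i+j)}-\alpha c_k^{(i)}c_{k+i}^{(j)}$; for $i\le j$, $1\le\ell\le i-1$: $\{c_k^{(i)},c_{k+\ell}^{(j)}\}_{2\alpha}=-\alpha c_k^{(i)}c_{k+\ell}^{(j)}+\alpha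 c_k^{(j+\ell)}c_{k+\ell}^{(i-\ell)}$; for $i\le j$, $j-i+1\le\ell\le j-1$: $\{c_k^{(j)},c_{k+\ell}^{(i)}\}_{2\alpha}=-\alpha c_k^{(j)}c_{k+\ell}^{(i)}+\alpha c_k^{(i+\ell)}c_{k+\ell}^{(j-\ell)}$; all other coordinate brackets (up to antisymmetry) are zero. Hamiltonian system: $\dot x=\{H,x\}$ for each coordinate $x$. *)

theory Defs
  imports "HOL-Analysis.Analysis"
begin

text \<open>Phase-space coordinates: D k is d_k, C j k is c_k^(j).
  Lattice index k ranges over 0..N-1 (representing Z/NZ); j over 1..m.\<close>
datatype coord = D nat | C nat nat

type_synonym state = "coord \<Rightarrow> real"

definition coords :: "nat \<Rightarrow> nat \<Rightarrow> coord set" where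
  "coords N m = {D k | k. k < N} \<union> {C j k | j k. 1 \<le> j \<and> j \<le> m \<and> k < N}"

definition dd :: "nat \<Rightarrow> state \<Rightarrow> int \<Rightarrow> real" where
  "dd N p k = p (D (nat (k mod int N)))"

text \<open>c_k^(j) with k modulo N and the convention c^(p) = 0 for p > m (and p = 0)\<close>
definition cc :: "nat \<Rightarrow> nat \<Rightarrow> state \<Rightarrow> nat \<Rightarrow> int \<Rightarrow> real" where
  "cc N m p j k = (if 1 \<le> j \<and> j \<le> m then p (C j (nat (k mod int N))) else 0)"

text \<open>The brackets of coordinates listed explicitly in the definition of the
  bracket (in the stated order of arguments); None = not listed.
  For c-c brackets, with l = (k2 - k1) mod N:
   l = a : {c_k^(a), c_(k+a)^(b)} = -c_k^(a+b) - alpha c_k^(a) c_(k+a)^(b);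
   1 \<le> l \<le> a-1 and (a \<le> b or l \<ge> a-b+1): the two families of the definition
   (case i=a \<le> j=b, and case j=a \<ge> i=b), which both read
   {c_k^(a), c_(k+l)^(b)} = -alpha c_k^(a) c_(k+l)^(b) + alpha c_k^(b+l) c_(k+l)^(a-l).\<close>
fun listed :: "nat \<Rightarrow> nat \<Rightarrow> real \<Rightarrow> coord \<Rightarrow> coord \<Rightarrow> state \<Rightarrow> real option" where
  "listed N m \<alpha> (D k1) (C j k2) p =
     (if k1 = k2 then Some (- cc N m p j (int k2) * (1 + \<alpha> * dd N p (int k1))) else None)"
| "listed N m \<alpha> (C j k1) (D k2) p =
     (if k2 = nat ((int k1 + int j) mod int N)
      then Some (- cc N m p j (int k1) * (1 + \<alpha> * dd N p (int k2))) else None)"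
| "listed N m \<alpha> (C a k1) (C b k2) p =
     (let l = nat ((int k2 - int k1) mod int N); k = int k1 in
      if l = a then Some (- cc N m p (a + b) k - \<alpha> * cc N m p a k * cc N m p b (k + int a))
      else if 1 \<le> l \<and> l + 1 \<le> a \<and> (a \<le> b \<or> a - b + 1 \<le> l)
      then Some (- \<alpha> * cc N m p a k * cc N m p b (k + int l)
                 + \<alpha> * cc N m p (b + l) k * cc N m p (a - l) (k + int l))
      else None)"
| "listed N m \<alpha> (D k1) (D k2) p = None"

definition br :: "nat \<Rightarrow> nat \<Rightarrow> real \<Rightarrow> coord \<Rightarrow> coord \<Rightarrow> state \<Rightarrow> real" where
  "br N m \<alpha> x y p = (case listed N m \<alpha> x y p of Some v \<Rightarrow> v
      | None \<Rightarrow> (case listed N m \<alpha> y x p of Some v \<Rightarrow> - v | None \<Rightarrow> 0))"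

definition pd :: "(state \<Rightarrow> real) \<Rightarrow> coord \<Rightarrow> state \<Rightarrow> real" where
  "pd F y p = deriv (\<lambda>t. F (p(y := t))) (p y)"

definition pbr :: "nat \<Rightarrow> nat \<Rightarrow> real \<Rightarrow> (state \<Rightarrow> real) \<Rightarrow> coord \<Rightarrow> state \<Rightarrow> real" where
  "pbr N m \<alpha> F x p = (\<Sum>y\<in>coords N m. pd F y p * br N m \<alpha> y x p)"

definition Ham :: "nat \<Rightarrow> real \<Rightarrow> state \<Rightarrow> real" where
  "Ham N \<alpha> p = (1 / \<alpha>) * (\<Sum>k<N. p (D k)) + (\<Sum>k<N. p (C 1 k))"

end

theory Submission
  imports Defs
begin

(* H is linear in the coordinates, so {H, x} = alpha^-1 sum_k {d_k, x} + sum_k {c_k^(1), x}.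
   For x = c_k^(j) only the summands at d_k, d_(k+j), c_(k-1)^(1) and c_(k+j)^(1) are nonzero,
   for x = d_k only those at c_(k-1)^(1) and c_k^(1).  Since N >= 2m + 2 > j + 1, the indices
   involved are distinct modulo N, so each bracket comes from a single entry of the table and
   the contributions simply add up. *)

lemma eq_mod_shift_iff:
  fixes a b c n :: int
  assumes "0 \<le> a" "a < n" "0 \<le> b" "b < n"
  shows "a = (b + c) mod n \<longleftrightarrow> b = (a - c) mod n"
proof -
  have "a = (b + c) mod n \<longleftrightarrow> a mod n = (b + c) mod n"
    using assms by simp
  also have "\<dots> \<longleftrightarrow> b mod n = (a - c) mod n"
    by (simp add: mod_eq_dvd_iff dvd_diff_commute algebra_simps)
  also have "\<dots> \<longleftrightarrow> b = (a - c) mod n"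
    using assms by simp
  finally show ?thesis .
qed

lemma mod_add_neq:
  fixes a d n :: int
  assumes "0 < d" "d < n"
  shows "(a + d) mod n \<noteq> a mod n"
proof
  assume "(a + d) mod n = a mod n"
  then have "n dvd d" by (simp add: mod_eq_dvd_iff)
  with assms show False using zdvd_imp_le by fastforce
qed

lemma eq_nat_mod_iff: "0 < N \<Longrightarrow> k = nat (a mod int N) \<longleftrightarrow> int k = a mod int N"
  by auto

lemma nat_diff_mod_eq_iff:
  assumes "l < N" "k < N"
  shows "nat ((int k - int k') mod int N) = l \<longleftrightarrow> int k = (int k' + int l) mod int N"
  using assms eq_nat_mod_iff[of N l "int k - int k'"] eq_mod_shift_iff[of "int k" "int N" "int l" "int k'"]
  by (auto simp: add.commute)

lemma sum_residue_delta:
  assumes "0 < N"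
  shows "(\<Sum>k<N. if int k = a mod int N then v else 0) = (v :: 'a :: comm_monoid_add)"
  using assms by (simp add: eq_nat_mod_iff[symmetric] nat_less_iff)

lemma pd_weighted_sum:
  assumes "finite S"
  shows "pd (\<lambda>q. \<Sum>x\<in>S. w x * q x) y p = (if y \<in> S then w y else 0)"
proof -
  let ?c = "if y \<in> S then w y else 0"
  have "(\<Sum>x\<in>S. w x * (p(y := t)) x) = ?c * t + (\<Sum>x\<in>S - {y}. w x * p x)" for t
    using assms by (cases "y \<in> S") (auto simp: sum.remove intro!: sum.cong)
  then show ?thesis
    unfolding pd_def by (simp add: DERIV_imp_deriv derivative_eq_intros)
qed

lemma finite_coords: "finite (coords N m)"
proof (rule finite_subset)
  show "coords N m \<subseteq> D ` {..<N} \<union> (\<lambda>(j, k). C j k) ` ({1..m} \<times> {..<N})"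
    unfolding coords_def by auto
qed simp

lemma pbr_weighted_sum:
  assumes "finite S" "S \<subseteq> coords N m"
  shows "pbr N m \<alpha> (\<lambda>q. \<Sum>x\<in>S. w x * q x) z p = (\<Sum>x\<in>S. w x * br N m \<alpha> x z p)"
proof -
  have "pbr N m \<alpha> (\<lambda>q. \<Sum>x\<in>S. w x * q x) z p
      = (\<Sum>y\<in>coords N m. if y \<in> S then w y * br N m \<alpha> y z p else 0)"
    unfolding pbr_def pd_weighted_sum[OF assms(1)] by (intro sum.cong) auto
  also have "\<dots> = (\<Sum>x\<in>S. w x * br N m \<alpha> x z p)"
    using assms by (simp add: sum.inter_restrict[symmetric] finite_coords Int_absorb1)
  finally show ?thesis .
qed

lemma sum_D_C1:
  "(\<Sum>x\<in>D ` {..<N} \<union> C 1 ` {..<N}. f x) = (\<Sum>k<N. f (D k)) + (\<Sum>k<N. f (C 1 k))"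
  by (subst sum.union_disjoint) (auto simp: sum.reindex inj_on_def)

lemma Ham_weighted_sum:
  "Ham N \<alpha> = (\<lambda>q. \<Sum>x\<in>D ` {..<N} \<union> C 1 ` {..<N}. case_coord (\<lambda>_. 1 / \<alpha>) (\<lambda>_ _. 1) x * q x)"
  unfolding sum_D_C1 by (simp add: Ham_def sum_distrib_left fun_eq_iff)

lemma pbr_Ham:
  assumes "1 \<le> m"
  shows "pbr N m \<alpha> (Ham N \<alpha>) z p
       = 1 / \<alpha> * (\<Sum>k<N. br N m \<alpha> (D k) z p) + (\<Sum>k<N. br N m \<alpha> (C 1 k) z p)"
proof -
  have "D ` {..<N} \<union> C 1 ` {..<N} \<subseteq> coords N m"
    using assms unfolding coords_def by auto
  then have "pbr N m \<alpha> (Ham N \<alpha>) z p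
      = (\<Sum>x\<in>D ` {..<N} \<union> C 1 ` {..<N}. case_coord (\<lambda>_. 1 / \<alpha>) (\<lambda>_ _. 1) x * br N m \<alpha> x z p)"
    unfolding Ham_weighted_sum by (intro pbr_weighted_sum) simp_all
  then show ?thesis
    unfolding sum_D_C1 by (simp add: sum_distrib_left)
qed

lemma br_from_listed:
  assumes "listed N m \<alpha> x y p = (if P then Some u else None)"
    and "listed N m \<alpha> y x p = (if Q then Some v else None)"
    and "\<not> (P \<and> Q)"
  shows "br N m \<alpha> x y p = (if P then u else 0) - (if Q then v else 0)"
  using assms by (simp add: br_def)

lemma br_C1_D:
  assumes "2 \<le> N" "k < N" "k' < N"
  shows "br N m \<alpha> (C 1 k') (D k) p
    = (if int k' = (int k - 1) mod int N
       then - cc N m p 1 (int k - 1) * (1 + \<alpha> * dd N p (int k)) else 0)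
    - (if k' = k then - cc N m p 1 (int k) * (1 + \<alpha> * dd N p (int k)) else 0)"
proof (rule br_from_listed)
  have "k = nat ((int k' + 1) mod int N) \<longleftrightarrow> int k' = (int k - 1) mod int N"
    using assms eq_mod_shift_iff[of "int k" "int N" "int k'" 1] by (simp add: eq_nat_mod_iff)
  then show "listed N m \<alpha> (C 1 k') (D k) p = (if int k' = (int k - 1) mod int N
       then Some (- cc N m p 1 (int k - 1) * (1 + \<alpha> * dd N p (int k))) else None)"
    by (auto simp: cc_def dd_def mod_simps)
  show "\<not> (int k' = (int k - 1) mod int N \<and> k' = k)"
    using mod_add_neq[of 1 "int N" "int k - 1"] assms by auto
qed simp

lemma br_D_C:
  assumes "1 \<le> j" "j < N" "k < N" "k' < N"
  shows "br N m \<alpha> (D k') (C j k) p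
    = (if k' = k then - cc N m p j (int k) * (1 + \<alpha> * dd N p (int k)) else 0)
    - (if int k' = (int k + int j) mod int N
       then - cc N m p j (int k) * (1 + \<alpha> * dd N p (int k + int j)) else 0)"
proof (rule br_from_listed)
  have "k' = nat ((int k + int j) mod int N) \<longleftrightarrow> int k' = (int k + int j) mod int N"
    using assms by (simp add: eq_nat_mod_iff)
  then show "listed N m \<alpha> (C j k) (D k') p = (if int k' = (int k + int j) mod int N
       then Some (- cc N m p j (int k) * (1 + \<alpha> * dd N p (int k + int j))) else None)"
    by (auto simp: cc_def dd_def mod_simps)
  show "\<not> (k' = k \<and> int k' = (int k + int j) mod int N)"
    using mod_add_neq[of "int j" "int N" "int k"] assms by auto
qed simp

lemma br_C1_C:
  assumes "1 \<le> j" "j + 1 < N" "k < N" "k' < N"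
  shows "br N m \<alpha> (C 1 k') (C j k) p
    = (if int k' = (int k - 1) mod int N
       then - cc N m p (j + 1) (int k - 1) - \<alpha> * cc N m p 1 (int k - 1) * cc N m p j (int k) else 0)
    - (if int k' = (int k + int j) mod int N
       then - cc N m p (j + 1) (int k) - \<alpha> * cc N m p j (int k) * cc N m p 1 (int k + int j) else 0)"
proof (rule br_from_listed)
  \<comment> \<open>The second family of c-c brackets needs 1 \<le> l \<le> a - 1, and l \<ge> a when b = 1,
    so it never involves c^(1).\<close>
  have "nat ((int k - int k') mod int N) = 1 \<longleftrightarrow> int k' = (int k - 1) mod int N"
    using assms nat_diff_mod_eq_iff[of 1 N k k'] eq_mod_shift_iff[of "int k" "int N" "int k'" 1] by simp
  then show "listed N m \<alpha> (C 1 k') (C j k) p = (if int k' = (int k - 1) mod int N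
       then Some (- cc N m p (j + 1) (int k - 1) - \<alpha> * cc N m p 1 (int k - 1) * cc N m p j (int k))
       else None)"
    by (auto simp: Let_def cc_def mod_simps add.commute)
  have "nat ((int k' - int k) mod int N) = j \<longleftrightarrow> int k' = (int k + int j) mod int N"
    using assms by (simp add: nat_diff_mod_eq_iff)
  then show "listed N m \<alpha> (C j k) (C 1 k') p = (if int k' = (int k + int j) mod int N
       then Some (- cc N m p (j + 1) (int k) - \<alpha> * cc N m p j (int k) * cc N m p 1 (int k + int j))
       else None)"
    by (auto simp: Let_def)
  show "\<not> (int k' = (int k - 1) mod int N \<and> int k' = (int k + int j) mod int N)"
    using mod_add_neq[of "int j + 1" "int N" "int k - 1"] assms by auto
qed

lemma pbr_Ham_D:
  assumes "1 \<le> m" "2 \<le> N" "k < N"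
  shows "pbr N m \<alpha> (Ham N \<alpha>) (D k) p
       = (1 + \<alpha> * dd N p (int k)) * (cc N m p 1 (int k) - cc N m p 1 (int k - 1))"
proof -
  have D_part: "(\<Sum>k'<N. br N m \<alpha> (D k') (D k) p) = 0"
    by (simp add: br_def)
  have "(\<Sum>k'<N. br N m \<alpha> (C 1 k') (D k) p)
      = (\<Sum>k'<N. (if int k' = (int k - 1) mod int N
            then - cc N m p 1 (int k - 1) * (1 + \<alpha> * dd N p (int k)) else 0)
          - (if k' = k then - cc N m p 1 (int k) * (1 + \<alpha> * dd N p (int k)) else 0))"
    using assms by (intro sum.cong refl br_C1_D) auto
  also have "\<dots> = - cc N m p 1 (int k - 1) * (1 + \<alpha> * dd N p (int k)) + cc N m p 1 (int k) * (1 + \<alpha> * dd N p (int k))"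
    using assms by (simp add: sum_subtractf sum_residue_delta)
  finally have C1_part: "(\<Sum>k'<N. br N m \<alpha> (C 1 k') (D k) p)
      = - cc N m p 1 (int k - 1) * (1 + \<alpha> * dd N p (int k)) + cc N m p 1 (int k) * (1 + \<alpha> * dd N p (int k))" .
  show ?thesis
    unfolding pbr_Ham[OF assms(1)] D_part C1_part by (simp add: algebra_simps)
qed

lemma pbr_Ham_C:
  assumes "1 \<le> m" "\<alpha> \<noteq> 0" "1 \<le> j" "j + 1 < N" "k < N"
  shows "pbr N m \<alpha> (Ham N \<alpha>) (C j k) p
       = cc N m p j (int k) * (dd N p (int k + int j) - dd N p (int k)
            + \<alpha> * cc N m p 1 (int k + int j) - \<alpha> * cc N m p 1 (int k - 1))
         + (cc N m p (j + 1) (int k) - cc N m p (j + 1) (int k - 1))"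
proof -
  have D_part: "(\<Sum>k'<N. br N m \<alpha> (D k') (C j k) p)
      = - cc N m p j (int k) * (1 + \<alpha> * dd N p (int k)) + cc N m p j (int k) * (1 + \<alpha> * dd N p (int k + int j))"
    using assms by (simp add: br_D_C sum_subtractf sum_residue_delta)
  have "(\<Sum>k'<N. br N m \<alpha> (C 1 k') (C j k) p)
      = (\<Sum>k'<N. (if int k' = (int k - 1) mod int N
            then - cc N m p (j + 1) (int k - 1) - \<alpha> * cc N m p 1 (int k - 1) * cc N m p j (int k) else 0)
          - (if int k' = (int k + int j) mod int N
            then - cc N m p (j + 1) (int k) - \<alpha> * cc N m p j (int k) * cc N m p 1 (int k + int j) else 0))"
    using assms by (intro sum.cong refl br_C1_C) auto
  also have "\<dots> = (- cc N m p (j + 1) (int k - 1) - \<alpha> * cc N m p 1 (int k - 1) * cc N m p j (int k))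
      + (cc N m p (j + 1) (int k) + \<alpha> * cc N m p j (int k) * cc N m p 1 (int k + int j))"
    using assms by (simp add: sum_subtractf sum_residue_delta)
  finally have C1_part: "(\<Sum>k'<N. br N m \<alpha> (C 1 k') (C j k) p)
      = (- cc N m p (j + 1) (int k - 1) - \<alpha> * cc N m p 1 (int k - 1) * cc N m p j (int k))
      + (cc N m p (j + 1) (int k) + \<alpha> * cc N m p j (int k) * cc N m p 1 (int k + int j))" .
  show ?thesis
    unfolding pbr_Ham[OF assms(1)] D_part C1_part using assms(2) by (simp add: field_simps)
qed

theorem mainTheorem17:
  fixes N m :: nat and \<alpha> :: real
  assumes "m \<ge> 1" and "N \<ge> 2 * m + 2" and "\<alpha> \<noteq> 0"
  shows "\<forall>p :: state. \<forall>k<N.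
     pbr N m \<alpha> (Ham N \<alpha>) (D k) p
       = (1 + \<alpha> * dd N p (int k)) * (cc N m p 1 (int k) - cc N m p 1 (int k - 1))
   \<and> (\<forall>j. 1 \<le> j \<and> j \<le> m - 1 \<longrightarrow>
       pbr N m \<alpha> (Ham N \<alpha>) (C j k) p
       = cc N m p j (int k) * (dd N p (int k + int j) - dd N p (int k)
            + \<alpha> * cc N m p 1 (int k + int j) - \<alpha> * cc N m p 1 (int k - 1))
         + (cc N m p (j + 1) (int k) - cc N m p (j + 1) (int k - 1)))
   \<and> pbr N m \<alpha> (Ham N \<alpha>) (C m k) p
       = cc N m p m (int k) * (dd N p (int k + int m) - dd N p (int k)
            + \<alpha> * cc N m p 1 (int k + int m) - \<alpha> * cc N m p 1 (int k - 1))"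
proof -
  have "cc N m p (m + 1) a = 0" for p a
    by (simp add: cc_def)
  with assms show ?thesis
    by (auto simp: pbr_Ham_D pbr_Ham_C)
qed

end
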